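(* Let $p,q,r$ be pairwise distinct primes with $p<q$ and $p<r$. Then for every integer $n$, $$|a_{pqr}(n)-a_{pqr}(n-1)|\le 1.$$
   Context: $\Phi_{pqr}(x)=\prod_{0<k<pqr,\ \gcd(k,pqr)=1}(x-\zeta^k)$, where $\zeta$ is a primitive $pqr$-th root of unity, is the ternary cyclotomic polynomial; $a_{pqr}(n)$ denotes its coefficient of $x^n$ (zero for $n$ outside $[0,\deg\Phi_{pqr}]$). *)

theory Defs
  imports Complex_Main "HOL-Computational_Algebra.Polynomial"
begin

definition cyclotomic_poly :: "nat \<Rightarrow> complex poly" where
  "cyclotomic_poly m =
     (\<Prod>k\<in>{k. 0 < k \<and> k < m \<and> coprime k m}.
        [: - ((cis (2 * pi / real m)) ^ k), 1 :])"

text \<open>a_m(n): coefficient of x^n in the m-th cyclotomic polynomial, for integer n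
  (zero for negative n; coeff is already zero above the degree).\<close>
definition cyc_coeff :: "nat \<Rightarrow> int \<Rightarrow> complex" where
  "cyc_coeff m n = (if n < 0 then 0 else coeff (cyclotomic_poly m) (nat n))"

end

theory Submission
  imports Defs "HOL-Computational_Algebra.Primes"
begin

(*
  1. Cyclotomic background: x^m - 1 is the product of Phi d over the divisors d of m.
     Expanding both sides of
       (x^N - 1)(x^p - 1)(x^q - 1)(x^r - 1) = Phi_N (x - 1)(x^pq - 1)(x^pr - 1)(x^qr - 1)
     and dividing by the last three factors shows that, below degree N, the coefficients
     of (x - 1) Phi_N agree with those of (x^p - 1)(x^q - 1)(x^r - 1) G, where
     G = (x^pqr - 1)^3 / ((x^pr - 1)(x^qr - 1)(x^pq - 1)) is a product of three geometric sums.
  2. Chinese remaindering: the coefficient of x^k in G is 1 if k = p r i + q r j + p q l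
     with i < q, j < p, l < r, and 0 otherwise; this happens exactly when the three CRT
     coordinates of k (the residues xc, yc, zc of the locale ternary) add up to k itself.
  3. Hence each coefficient of (x - 1) Phi_N is an inclusion-exclusion sum of eight such
     indicators at k, k - p, ..., k - p - q - r. Shifting by a prime moves two coordinates
     with wrap-around modulo N, and a finite analysis of the possible wrap patterns bounds
     the alternating sum by 1 in absolute value.
*)

text \<open>The primitive \<open>m\<close>-th root of unity \<open>exp(2 pi i / m)\<close>, the \<open>d\<close>-th cyclotomic polynomial
  as the product over the primitive \<open>d\<close>-th roots of unity (index \<open>0\<close> only occurs for
  \<open>d = 1\<close>), and the polynomial \<open>x^m - 1\<close>.\<close>

definition zeta :: "nat \<Rightarrow> complex" where
  "zeta m = cis (2 * pi / real m)"

definition Phi :: "nat \<Rightarrow> complex poly" where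
  "Phi d = (\<Prod>j\<in>{j. j < d \<and> coprime j d}. [:- (zeta d ^ j), 1:])"

definition unity_poly :: "nat \<Rightarrow> complex poly" where
  "unity_poly m = monom 1 m - 1"

lemma zeta_pow: "zeta m ^ k = cis (2 * pi * real k / real m)"
  by (simp add: zeta_def DeMoivre mult_ac)

lemma zeta_pow_cancel:
  assumes "0 < g" "0 < c"
  shows "zeta (g * c) ^ (g * a) = zeta c ^ a"
proof -
  have "2 * pi * real (g * a) / real (g * c) = 2 * pi * real a / real c"
    using assms by (simp add: field_simps)
  then show ?thesis by (simp add: zeta_pow)
qed

lemma prod_linear_factors_dvd:
  fixes f :: "'a::idom poly"
  assumes "finite S" "f \<noteq> 0" "\<forall>z\<in>S. poly f z = 0"
  shows "(\<Prod>z\<in>S. [:-z, 1:]) dvd f"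
  using assms
proof (induction S arbitrary: f rule: finite_induct)
  case empty
  then show ?case by simp
next
  case (insert z S)
  have "[:-z, 1:] dvd f" using insert.prems by (simp add: poly_eq_0_iff_dvd)
  then obtain g where g: "f = [:-z, 1:] * g" by (elim dvdE)
  have "g \<noteq> 0" using insert.prems g by auto
  moreover have "\<forall>w\<in>S. poly g w = 0"
  proof
    fix w assume "w \<in> S"
    then have "w \<noteq> z" "poly f w = 0" using insert by auto
    then show "poly g w = 0" using g by simp
  qed
  ultimately have "(\<Prod>z\<in>S. [:-z, 1:]) dvd g" using insert.IH by blast
  then show ?case unfolding prod.insert[OF insert.hyps] g by (rule mult_dvd_mono[OF dvd_refl])
qed

lemma monic_dvd_eq:
  fixes f g :: "'a::idom poly"
  assumes "f dvd g" "degree f = degree g" "lead_coeff f = 1" "lead_coeff g = 1"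
  shows "f = g"
proof -
  obtain h where h: "g = f * h" using assms(1) by (elim dvdE)
  have "g \<noteq> 0" using assms(4) by auto
  then have "h \<noteq> 0" "f \<noteq> 0" using h by auto
  then have "degree g = degree f + degree h" using h degree_mult_eq by blast
  then have "degree h = 0" using assms(2) by simp
  then obtain c where c: "h = [:c:]" by (metis degree_eq_zeroE)
  have "lead_coeff g = lead_coeff f * c" using h c by (simp add: lead_coeff_mult)
  then have "c = 1" using assms by simp
  then show ?thesis using h c by simp
qed

lemma unity_poly_degree:
  assumes "0 < m"
  shows "degree (unity_poly m) = m" "lead_coeff (unity_poly m) = 1"
proof -
  have top: "coeff (unity_poly m) m = 1" using assms by (simp add: unity_poly_def)
  have "degree (unity_poly m) \<le> m" unfolding unity_poly_def
    by (intro degree_diff_le degree_monom_le) simp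
  moreover have "m \<le> degree (unity_poly m)" using top by (simp add: le_degree)
  ultimately show "degree (unity_poly m) = m" by simp
  then show "lead_coeff (unity_poly m) = 1" using top by simp
qed

lemma unity_poly_nonzero: "0 < m \<Longrightarrow> unity_poly m \<noteq> 0"
  using unity_poly_degree(2)[of m] by auto

lemma prod_roots_of_unity:
  assumes "0 < m"
  shows "(\<Prod>k<m. [:- (zeta m ^ k), 1:]) = unity_poly m"
proof -
  let ?S = "{z::complex. z ^ m = 1}"
  have bij: "bij_betw (\<lambda>k. cis (2 * pi * real k / real m)) {..<m} ?S"
    using bij_betw_roots_unity[OF assms] .
  have "(\<Prod>k<m. [:- (zeta m ^ k), 1:]) = (\<Prod>z\<in>?S. [:-z, 1:])"
    unfolding zeta_pow using prod.reindex_bij_betw[OF bij, of "\<lambda>z. [:-z, 1:]"] by simp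
  moreover have "(\<Prod>z\<in>?S. [:-z, 1:]) dvd unity_poly m"
  proof (rule prod_linear_factors_dvd)
    show "finite ?S" using finite_roots_unity assms by auto
    show "unity_poly m \<noteq> 0" using unity_poly_nonzero[OF assms] .
    show "\<forall>z\<in>?S. poly (unity_poly m) z = 0" by (simp add: unity_poly_def poly_monom)
  qed
  moreover have "degree (\<Prod>z\<in>?S. [:-z, (1::complex):]) = m"
    using degree_prod_eq_sum_degree[of ?S "\<lambda>z. [:-z, (1::complex):]"] card_roots_unity_eq[OF assms]
    by simp
  moreover have "lead_coeff (\<Prod>z\<in>?S. [:-z, (1::complex):]) = 1"
    by (simp add: lead_coeff_prod)
  ultimately show ?thesis
    using monic_dvd_eq[of "\<Prod>z\<in>?S. [:-z, 1:]" "unity_poly m"] unity_poly_degree[OF assms] by simp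
qed

text \<open>Grouping the \<open>m\<close>-th roots of unity by their exact order gives the classical
  factorisation \<open>x^m - 1 = (\<Prod>d | d dvd m. Phi d)\<close>: the root \<open>zeta m ^ k\<close> equals
  \<open>zeta d ^ l\<close> with \<open>d = m div gcd k m\<close> and \<open>l = k div gcd k m\<close> coprime to \<open>d\<close>.\<close>

lemma prod_Phi_divisors:
  assumes "0 < m"
  shows "(\<Prod>d\<in>{d. d dvd m}. Phi d) = unity_poly m"
proof -
  let ?J = "\<lambda>d. {j. j < d \<and> coprime j d}"
  let ?T = "Sigma {d. d dvd m} ?J"
  have fin: "finite {d. d dvd m}" using assms by (simp add: finite_divisors_nat)
  have "(\<Prod>d\<in>{d. d dvd m}. Phi d) = (\<Prod>d\<in>{d. d dvd m}. \<Prod>j\<in>?J d. [:- (zeta d ^ j), 1:])"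
    by (simp add: Phi_def)
  also have "\<dots> = (\<Prod>(d,j)\<in>?T. [:- (zeta d ^ j), 1:])"
    using fin by (subst prod.Sigma) auto
  also have "\<dots> = (\<Prod>k<m. [:- (zeta m ^ k), 1:])"
  proof (rule sym[OF prod.reindex_bij_witness[where j = "\<lambda>k. (m div gcd k m, k div gcd k m)"
        and i = "\<lambda>(d,l). l * (m div d)"]])
    fix k assume k: "k \<in> {..<m}"
    define g where "g = gcd k m"
    have g: "0 < g" using assms g_def by simp
    obtain a where a: "k = g * a" using g_def by (metis gcd_dvd1 dvdE)
    obtain c where c: "m = g * c" using g_def by (metis gcd_dvd2 dvdE)
    have c_pos: "0 < c" using assms c by simp
    have "m div g = c" "k div g = a" using a c g by auto
    then have quot: "m div gcd k m = c" "k div gcd k m = a" unfolding g_def .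
    have m_div_c: "m div c = g" using c c_pos by simp
    have "coprime (k div g) (m div g)" unfolding g_def using assms by (intro div_gcd_coprime) auto
    then have "coprime a c" using quot g_def by simp
    moreover have "a < c" using k a c g by auto
    ultimately show "(m div gcd k m, k div gcd k m) \<in> ?T"
      unfolding quot using c by auto
    show "(case (m div gcd k m, k div gcd k m) of (d, l) \<Rightarrow> l * (m div d)) = k"
      unfolding quot using m_div_c a by (simp add: mult.commute)
    show "(case (m div gcd k m, k div gcd k m) of (d, j) \<Rightarrow> [:- (zeta d ^ j), 1:]) = [:- (zeta m ^ k), 1:]"
      unfolding quot using a c zeta_pow_cancel[OF g c_pos, of a] by simp
  next
    fix b assume b: "b \<in> ?T"
    obtain d l where dl: "b = (d, l)" by (cases b)
    have d: "d dvd m" "l < d" "coprime l d" using b dl by auto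
    obtain c where c: "m = d * c" using d(1) by (elim dvdE)
    have pos: "0 < c" "0 < d" using assms c by auto
    have m_div_d: "m div d = c" using c pos by simp
    have gcd_eq: "gcd (l * c) m = c"
      using d(3) c by (simp add: gcd_mult_distrib_nat[symmetric] mult.commute)
    show "(m div gcd (case b of (d, l) \<Rightarrow> l * (m div d)) m,
           (case b of (d, l) \<Rightarrow> l * (m div d)) div gcd (case b of (d, l) \<Rightarrow> l * (m div d)) m) = b"
      using dl m_div_d gcd_eq c pos by simp
    show "(case b of (d, l) \<Rightarrow> l * (m div d)) \<in> {..<m}"
      using dl m_div_d c d(2) pos by simp
  qed
  also have "\<dots> = unity_poly m" using prod_roots_of_unity[OF assms] .
  finally show ?thesis .
qed

lemma cyclotomic_poly_eq_Phi: "1 < m \<Longrightarrow> cyclotomic_poly m = Phi m"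
proof -
  assume m: "1 < m"
  have "{k. 0 < k \<and> k < m \<and> coprime k m} = {j. j < m \<and> coprime j m}"
    using m by (auto intro!: Nat.gr0I)
  then show ?thesis unfolding cyclotomic_poly_def Phi_def zeta_def by simp
qed

text \<open>If \<open>N\<close> has a proper prime divisor \<open>p\<close>, then both \<open>0\<close> and \<open>p\<close> are excluded from
  the index set of \<open>Phi N\<close>, so its degree is at most \<open>N - 2\<close>.\<close>

lemma degree_cyclotomic_poly_le:
  assumes "prime p" "p < N" "p dvd N"
  shows "degree (cyclotomic_poly N) \<le> N - 2"
proof -
  let ?S = "{k. 0 < k \<and> k < N \<and> coprime k N}"
  have "?S \<subseteq> {1..<N} - {p}"
    using assms by (auto simp: prime_imp_coprime coprime_commute)
  then have "card ?S \<le> card ({1..<N} - {p})" by (intro card_mono) auto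
  also have "\<dots> = N - 2" using assms prime_gt_0_nat[OF assms(1)] by simp
  finally have "card ?S \<le> N - 2" .
  moreover have "degree (cyclotomic_poly N) \<le> card ?S"
    unfolding cyclotomic_poly_def
    using degree_prod_sum_le[of ?S "\<lambda>k. [:- (cis (2 * pi / real N) ^ k), (1::complex):]"]
    by (simp add: o_def)
  ultimately show ?thesis by linarith
qed

lemma prod_divisors_prime_mult:
  fixes f :: "nat \<Rightarrow> 'a::comm_monoid_mult"
  assumes p: "prime p" and not_dvd: "\<not> p dvd m" and m: "0 < m"
  shows "(\<Prod>d\<in>{d. d dvd p * m}. f d) = (\<Prod>d\<in>{d. d dvd m}. f d) * (\<Prod>d\<in>{d. d dvd m}. f (p * d))"
proof -
  have p_pos: "0 < p" using p prime_gt_0_nat by blast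
  have split: "{d. d dvd p * m} = {d. d dvd m} \<union> (\<lambda>d. p * d) ` {d. d dvd m}"
  proof (intro set_eqI iffI)
    fix d assume "d \<in> {d. d dvd p * m}"
    then have d: "d dvd p * m" by simp
    show "d \<in> {d. d dvd m} \<union> (\<lambda>d. p * d) ` {d. d dvd m}"
    proof (cases "p dvd d")
      case True
      then obtain e where e: "d = p * e" by (elim dvdE)
      then have "e dvd m" using d p_pos by simp
      then show ?thesis using e by auto
    next
      case False
      then have "coprime p d" using p by (simp add: prime_imp_coprime)
      then have "coprime d p" by (simp add: coprime_commute)
      then have "d dvd m" using d by (simp add: coprime_dvd_mult_right_iff)
      then show ?thesis by auto
    qed
  qed auto
  have disjoint: "{d. d dvd m} \<inter> (\<lambda>d. p * d) ` {d. d dvd m} = {}"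
    using not_dvd dvd_mult_left by blast
  have "inj_on (\<lambda>d. p * d) {d. d dvd m}" using p_pos by (auto simp: inj_on_def)
  then show ?thesis unfolding split using m disjoint
    by (simp add: finite_divisors_nat prod.union_disjoint prod.reindex)
qed

lemma prod_divisors_prime:
  fixes f :: "nat \<Rightarrow> 'a::comm_monoid_mult"
  assumes "prime p"
  shows "(\<Prod>d\<in>{d. d dvd p}. f d) = f 1 * f p"
proof -
  have "{d. d dvd p} = {1, p}" using assms by (auto simp: prime_nat_iff)
  moreover have "p \<noteq> 1" using assms by auto
  ultimately show ?thesis by simp
qed

lemma unity_poly_prime_mult:
  assumes "prime p" "\<not> p dvd m" "0 < m"
  shows "unity_poly (p * m) = unity_poly m * (\<Prod>d\<in>{d. d dvd m}. Phi (p * d))"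
proof -
  have "0 < p * m" using assms prime_gt_0_nat by simp
  then have "unity_poly (p * m) = (\<Prod>d\<in>{d. d dvd p * m}. Phi d)" using prod_Phi_divisors by simp
  then show ?thesis
    using prod_divisors_prime_mult[OF assms, of Phi] prod_Phi_divisors[OF assms(3)] by simp
qed

lemma ternary_unity_identity:
  assumes p: "prime p" and q: "prime q" and r: "prime r"
    and pq: "p \<noteq> q" and pr: "p \<noteq> r" and qr: "q \<noteq> r"
  shows "unity_poly (p*q*r) * unity_poly p * unity_poly q * unity_poly r
       = Phi (p*q*r) * unity_poly 1 * unity_poly (p*q) * unity_poly (p*r) * unity_poly (q*r)"
proof -
  have npq: "\<not> p dvd q" and npr: "\<not> p dvd r" and nqr: "\<not> q dvd r"
    using p q r pq pr qr primes_dvd_imp_eq by blast+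
  have np1: "\<not> p dvd 1" using prime_gt_1_nat[OF p] by auto
  have npqr: "\<not> p dvd q * r" using npq npr p by (simp add: prime_dvd_mult_iff)
  have pos: "0 < q" "0 < r" using q r prime_gt_0_nat by auto
  have e1: "unity_poly p = unity_poly 1 * Phi p"
    using unity_poly_prime_mult[OF p np1] by simp
  have e2: "unity_poly (p*q) = unity_poly q * (Phi p * Phi (p*q))"
    using unity_poly_prime_mult[OF p npq] pos prod_divisors_prime[OF q, of "\<lambda>d. Phi (p*d)"] by simp
  have e3: "unity_poly (p*r) = unity_poly r * (Phi p * Phi (p*r))"
    using unity_poly_prime_mult[OF p npr] pos prod_divisors_prime[OF r, of "\<lambda>d. Phi (p*d)"] by simp
  have "(\<Prod>d\<in>{d. d dvd q * r}. Phi (p * d)) = (Phi p * Phi (p*r)) * (Phi (p*q) * Phi (p*(q*r)))"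
    using prod_divisors_prime_mult[OF q nqr, of "\<lambda>d. Phi (p*d)"] pos
      prod_divisors_prime[OF r, of "\<lambda>d. Phi (p*d)"] prod_divisors_prime[OF r, of "\<lambda>d. Phi (p*(q*d))"]
    by (simp add: mult.assoc)
  then have e4: "unity_poly (p*q*r) = unity_poly (q*r) * ((Phi p * Phi (p*r)) * (Phi (p*q) * Phi (p*q*r)))"
    using unity_poly_prime_mult[OF p npqr] pos by (simp add: mult.assoc)
  show ?thesis unfolding e1 e2 e3 e4 by (simp add: ac_simps)
qed

definition geom_poly :: "nat \<Rightarrow> nat \<Rightarrow> complex poly" where
  "geom_poly a k = (\<Sum>i<k. monom 1 (a * i))"

lemma unity_poly_mult_geom: "unity_poly a * geom_poly a k = unity_poly (a * k)"
proof (induction k)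
  case 0
  then show ?case by (simp add: geom_poly_def unity_poly_def)
next
  case (Suc k)
  have "unity_poly a * geom_poly a (Suc k) = unity_poly a * geom_poly a k + unity_poly a * monom 1 (a*k)"
    by (simp add: geom_poly_def algebra_simps)
  also have "\<dots> = unity_poly (a * Suc k)"
    using Suc by (simp add: unity_poly_def algebra_simps mult_monom)
  finally show ?case .
qed

text \<open>Dividing the ternary identity by \<open>(x^pq - 1)(x^pr - 1)(x^qr - 1)\<close> expresses
  \<open>(x - 1) Phi N\<close>, up to the factor \<open>(x^N - 1)^2\<close>, as the product of
  \<open>(x^p - 1)(x^q - 1)(x^r - 1)\<close> with three geometric polynomials.\<close>

lemma ternary_key_identity:
  assumes "prime p" "prime q" "prime r" "p \<noteq> q" "p \<noteq> r" "q \<noteq> r"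
  shows "(unity_poly 1 * Phi (p*q*r)) * unity_poly (p*q*r) * unity_poly (p*q*r)
       = unity_poly p * unity_poly q * unity_poly r
         * (geom_poly (p*r) q * geom_poly (q*r) p * geom_poly (p*q) r)"
proof -
  let ?N = "p*q*r"
  let ?U = unity_poly
  have "0 < ?N" using assms prime_gt_0_nat by simp
  have g1: "?U (p*r) * geom_poly (p*r) q = ?U ?N"
    using unity_poly_mult_geom[of "p*r" q] by (simp add: ac_simps)
  have g2: "?U (q*r) * geom_poly (q*r) p = ?U ?N"
    using unity_poly_mult_geom[of "q*r" p] by (simp add: ac_simps)
  have g3: "?U (p*q) * geom_poly (p*q) r = ?U ?N"
    using unity_poly_mult_geom[of "p*q" r] by (simp add: ac_simps)
  let ?G = "geom_poly (p*r) q * geom_poly (q*r) p * geom_poly (p*q) r"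
  have "?U ?N * ((?U 1 * Phi ?N) * ?U ?N * ?U ?N)
      = (?U 1 * Phi ?N) * (?U (p*r) * geom_poly (p*r) q) * (?U (q*r) * geom_poly (q*r) p)
        * (?U (p*q) * geom_poly (p*q) r)"
    unfolding g1 g2 g3 by (simp add: ac_simps)
  also have "\<dots> = (Phi ?N * ?U 1 * ?U (p*q) * ?U (p*r) * ?U (q*r)) * ?G"
    by (simp add: ac_simps)
  also have "\<dots> = ?U ?N * (?U p * ?U q * ?U r * ?G)"
    unfolding ternary_unity_identity[OF assms, symmetric] by (simp add: ac_simps)
  finally show ?thesis using unity_poly_nonzero[OF \<open>0 < ?N\<close>] by simp
qed

lemma coeff_mult_unity_poly_square:
  assumes "n < N"
  shows "coeff (f * unity_poly N * unity_poly N) n = coeff f n"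
proof -
  have "f * unity_poly N * unity_poly N = f + monom 1 N * (f * (monom 1 N - 2))"
    by (simp add: unity_poly_def algebra_simps)
  then show ?thesis using assms by (simp add: coeff_monom_mult)
qed

lemma unity_poly_triple_expand:
  "unity_poly p * unity_poly q * unity_poly r =
     monom 1 (p+q+r) - monom 1 (p+q) - monom 1 (p+r) - monom 1 (q+r)
     + monom 1 p + monom 1 q + monom 1 r - 1"
  by (simp add: unity_poly_def algebra_simps mult_monom)

lemma sum_nested_triple:
  "(\<Sum>l<k3. \<Sum>j<k2. \<Sum>i<k1. g i j l) = (\<Sum>(i,j,l)\<in>{..<k1} \<times> {..<k2} \<times> {..<k3}. g i j l)"
proof -
  have "(\<Sum>(i,j,l)\<in>{..<k1} \<times> {..<k2} \<times> {..<k3}. g i j l) = (\<Sum>i<k1. \<Sum>j<k2. \<Sum>l<k3. g i j l)"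
    by (simp add: sum.cartesian_product)
  also have "\<dots> = (\<Sum>l<k3. \<Sum>j<k2. \<Sum>i<k1. g i j l)"
    by (subst sum.swap) (subst (2) sum.swap, subst sum.swap, rule refl)
  finally show ?thesis by simp
qed

lemma coeff_geom_triple:
  "coeff (geom_poly A k1 * geom_poly B k2 * geom_poly C k3) m =
     (\<Sum>(i,j,l)\<in>{..<k1} \<times> {..<k2} \<times> {..<k3}. if A*i + B*j + C*l = m then 1 else 0)"
proof -
  have "geom_poly A k1 * geom_poly B k2 * geom_poly C k3
      = (\<Sum>l<k3. \<Sum>j<k2. \<Sum>i<k1. monom 1 (A*i + B*j + C*l))"
    by (simp add: geom_poly_def sum_distrib_left sum_distrib_right mult_monom)
  then show ?thesis
    by (simp add: coeff_sum coeff_monom sum_nested_triple split_def)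
qed

text \<open>A fixed inverse of \<open>a\<close> modulo \<open>m\<close> (meaningful when \<open>a\<close> and \<open>m\<close> are coprime).\<close>

definition inv_mod :: "nat \<Rightarrow> nat \<Rightarrow> int" where
  "inv_mod a m = (SOME u. (int a * u) mod int m = 1)"

lemma inv_mod:
  assumes "coprime a m" "1 < m"
  shows "(int a * inv_mod a m) mod int m = 1"
proof -
  obtain u v where "u * int a + v * int m = 1"
    using bezout_int[of "int a" "int m"] assms(1) by (auto simp: coprime_iff_gcd_eq_1)
  then have "int a * u = 1 + int m * (- v)" by (simp add: algebra_simps)
  then have "(int a * u) mod int m = 1 mod int m" by (simp only: mod_mult_self2)
  then have "(int a * u) mod int m = 1" using assms(2) by simp
  then show ?thesis unfolding inv_mod_def by (rule someI)
qed

text \<open>For coprime \<open>P\<close>, \<open>Q\<close> the number \<open>crt_part P Q m\<close> is the unique residue modulo \<open>P Q\<close>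
  that is divisible by \<open>P\<close> and congruent to \<open>m\<close> modulo \<open>Q\<close>; it has the form \<open>P i\<close>
  with \<open>0 \<le> i < Q\<close>.\<close>

definition crt_part :: "nat \<Rightarrow> nat \<Rightarrow> int \<Rightarrow> int" where
  "crt_part P Q m = int P * ((m * inv_mod P Q) mod int Q)"

lemma crt_part_bounds:
  assumes "0 < P" "0 < Q"
  shows "0 \<le> crt_part P Q m" "crt_part P Q m < int (P * Q)"
proof -
  have "0 \<le> (m * inv_mod P Q) mod int Q" "(m * inv_mod P Q) mod int Q < int Q"
    using assms by auto
  then show "0 \<le> crt_part P Q m" "crt_part P Q m < int (P * Q)"
    unfolding crt_part_def using assms by (auto intro: mult_strict_left_mono)
qed

lemma crt_part_diff:
  "crt_part P Q (a - b) = (crt_part P Q a - crt_part P Q b) mod int (P * Q)"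
proof -
  have "((a - b) * inv_mod P Q) mod int Q
      = ((a * inv_mod P Q) mod int Q - (b * inv_mod P Q) mod int Q) mod int Q"
    by (simp add: left_diff_distrib mod_diff_eq)
  then have "crt_part P Q (a - b)
      = (int P * ((a * inv_mod P Q) mod int Q - (b * inv_mod P Q) mod int Q)) mod (int P * int Q)"
    unfolding crt_part_def by (simp only: mod_mult_mult1)
  then show ?thesis unfolding crt_part_def by (simp add: right_diff_distrib)
qed

lemma crt_part_multiple: "int Q dvd m \<Longrightarrow> crt_part P Q m = 0"
  unfolding crt_part_def by auto

lemma crt_part_mod:
  assumes "coprime P Q" "1 < Q"
  shows "crt_part P Q m mod int Q = m mod int Q"
proof -
  have "crt_part P Q m mod int Q = (m * (int P * inv_mod P Q)) mod int Q"
    unfolding crt_part_def by (simp add: mod_mult_right_eq ac_simps)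
  also have "\<dots> = (m * ((int P * inv_mod P Q) mod int Q)) mod int Q"
    by (simp add: mod_mult_right_eq)
  also have "\<dots> = m mod int Q" using inv_mod[OF assms] by simp
  finally show ?thesis .
qed

lemma crt_part_index:
  assumes "0 < Q"
  obtains i where "i < Q" "crt_part P Q m = int P * int i"
proof
  let ?i = "nat ((m * inv_mod P Q) mod int Q)"
  show "?i < Q" using assms by (simp add: nat_less_iff)
  show "crt_part P Q m = int P * int ?i" unfolding crt_part_def using assms by simp
qed

lemma crt_part_coord:
  assumes "coprime P Q" "1 < Q" "0 \<le> i" "i < int Q"
  shows "crt_part P Q (int P * i + int Q * R) = int P * i"
proof -
  have "(int P * i + int Q * R) * inv_mod P Q = i * (int P * inv_mod P Q) + int Q * (R * inv_mod P Q)"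
    by (simp add: algebra_simps)
  then have "((int P * i + int Q * R) * inv_mod P Q) mod int Q = (i * (int P * inv_mod P Q)) mod int Q"
    by (simp only: mod_mult_self2)
  also have "\<dots> = (i * ((int P * inv_mod P Q) mod int Q)) mod int Q"
    by (simp add: mod_mult_right_eq)
  also have "\<dots> = i" using inv_mod[OF assms(1,2)] assms(3,4) by simp
  finally show ?thesis unfolding crt_part_def by simp
qed

text \<open>A number \<open>s < P\<close> coprime to \<open>Q\<close> has a nonzero \<open>Q\<close>-index, so \<open>s < crt_part P Q s\<close>.\<close>

lemma crt_part_gt:
  assumes "coprime P Q" "1 < Q" "coprime s Q" "s < P"
  shows "int s < crt_part P Q (int s)"
proof -
  let ?u = "inv_mod P Q"
  have "(int s * ?u) mod int Q \<noteq> 0"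
  proof
    assume "(int s * ?u) mod int Q = 0"
    then have "int Q dvd int s * ?u" by (simp add: mod_eq_0_iff_dvd)
    moreover have "coprime (int Q) (int s)" using assms(3) by (simp add: coprime_commute)
    ultimately have "int Q dvd ?u" by (simp add: coprime_dvd_mult_right_iff)
    then have "(int P * ?u) mod int Q = 0" by simp
    then show False using inv_mod[OF assms(1,2)] by simp
  qed
  moreover have "0 \<le> (int s * ?u) mod int Q" using assms(2) by simp
  ultimately have "int P * 1 \<le> int P * ((int s * ?u) mod int Q)"
    by (intro mult_left_mono) auto
  moreover have "int s < int P" using assms(4) by simp
  ultimately show ?thesis unfolding crt_part_def by linarith
qed

lemma eq_of_mod_between:
  fixes N s c :: int
  assumes "0 < N" "s mod N = c" "c < s" "s < 2 * N"
  shows "s = N + c"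
proof -
  define d where "d = s div N"
  have s: "s = N * d + c" using assms(2) d_def by (metis div_mult_mod_eq mult.commute)
  have "0 \<le> c" using assms(1,2) by auto
  have "0 < N * d" using s assms(3) by simp
  then have "1 \<le> d" using assms(1) by (simp add: zero_less_mult_iff)
  moreover have "N * d < N * 2" using s assms(4) \<open>0 \<le> c\<close> by simp
  then have "d < 2" using assms(1) by simp
  ultimately show ?thesis using s by simp
qed

text \<open>Every integer \<open>m\<close> has CRT coordinates
  \<open>xc m = p r i\<close>, \<open>yc m = q r j\<close>, \<open>zc m = p q l\<close> (\<open>i < q\<close>, \<open>j < p\<close>, \<open>l < r\<close>) whose sum is
  congruent to \<open>m\<close> modulo \<open>N\<close>; \<open>m\<close> is a sum \<open>p r i + q r j + p q l\<close> iff the coordinate sum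
  equals \<open>m\<close> itself, which \<open>rep m\<close> indicates.\<close>

locale ternary =
  fixes p q r :: nat
  assumes prime_p: "prime p" and prime_q: "prime q" and prime_r: "prime r"
    and p_ne_q: "p \<noteq> q" and p_ne_r: "p \<noteq> r" and q_ne_r: "q \<noteq> r"
begin

definition N :: int where "N = int (p * q * r)"

definition xc :: "int \<Rightarrow> int" where "xc m = crt_part (p * r) q m"
definition yc :: "int \<Rightarrow> int" where "yc m = crt_part (q * r) p m"
definition zc :: "int \<Rightarrow> int" where "zc m = crt_part (p * q) r m"

definition rep :: "int \<Rightarrow> int" where
  "rep m = (if xc m + yc m + zc m = m then 1 else 0)"

lemma gt1: "1 < p" "1 < q" "1 < r"
  using prime_p prime_q prime_r prime_gt_1_nat by auto

lemma coprime_pairs: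
  "coprime p q" "coprime p r" "coprime q r" "coprime q p" "coprime r p" "coprime r q"
  using primes_coprime prime_p prime_q prime_r p_ne_q p_ne_r q_ne_r
  by (metis coprime_commute)+

lemma coprime_products: "coprime (p * r) q" "coprime (q * r) p" "coprime (p * q) r"
  using coprime_pairs by simp_all

lemma N_eq: "int (p * r * q) = N" "int (q * r * p) = N" "int (p * q * r) = N"
  unfolding N_def by (simp_all add: ac_simps)

lemma N_gt: "int p < N" "int q < N" "int r < N" "0 < N"
proof -
  have "1 < q * r" "1 < p * r" "1 < p * q" using gt1 by (metis less_1_mult)+
  then have "p * 1 < p * (q * r)" "q * 1 < q * (p * r)" "r * 1 < r * (p * q)"
    using gt1 by (intro mult_strict_left_mono; simp)+
  then have "p < p * q * r" "q < p * q * r" "r < p * q * r" by (simp_all add: ac_simps)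
  then show less: "int p < N" "int q < N" "int r < N" unfolding N_def by (simp_all only: of_nat_less_iff)
  show "0 < N" using less(1) by linarith
qed

lemma coord_bounds:
  "0 \<le> xc m" "xc m < N" "0 \<le> yc m" "yc m < N" "0 \<le> zc m" "zc m < N"
  unfolding xc_def yc_def zc_def using crt_part_bounds gt1 N_eq by (metis mult_pos_pos zero_less_one less_trans)+

lemma coord_diff:
  "xc (a - b) = (xc a - xc b) mod N" "yc (a - b) = (yc a - yc b) mod N" "zc (a - b) = (zc a - zc b) mod N"
  unfolding xc_def yc_def zc_def N_def by (simp_all add: crt_part_diff ac_simps)

lemma coord_vanish: "xc (int q) = 0" "yc (int p) = 0" "zc (int r) = 0"
  unfolding xc_def yc_def zc_def by (simp_all add: crt_part_multiple)

text \<open>The coordinate sum is congruent to \<open>m\<close> modulo each of \<open>p, q, r\<close>, hence modulo \<open>N\<close>.\<close>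

lemma coord_sum_mod: "(xc m + yc m + zc m) mod N = m mod N"
proof -
  let ?D = "xc m + yc m + zc m - m"
  have "yc m mod int p = m mod int p" "zc m mod int r = m mod int r" "xc m mod int q = m mod int q"
    unfolding xc_def yc_def zc_def using crt_part_mod coprime_products gt1 by blast+
  then have dvd: "int p dvd yc m - m" "int r dvd zc m - m" "int q dvd xc m - m"
    by (simp_all add: mod_eq_dvd_iff)
  let ?i = "(m * inv_mod (p*r) q) mod int q"
  let ?j = "(m * inv_mod (q*r) p) mod int p"
  let ?l = "(m * inv_mod (p*q) r) mod int r"
  have "?D = (yc m - m) + int p * (int r * ?i + int q * ?l)"
    "?D = (xc m - m) + int q * (int r * ?j + int p * ?l)"
    "?D = (zc m - m) + int r * (int p * ?i + int q * ?j)"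
    unfolding xc_def yc_def zc_def crt_part_def by (simp_all add: algebra_simps)
  then have "int p dvd ?D" "int q dvd ?D" "int r dvd ?D"
    using dvd by (metis dvd_add dvd_triv_left)+
  moreover have "coprime (int p) (int q)" "coprime (int p * int q) (int r)"
    using coprime_pairs by simp_all
  ultimately have "int p * int q * int r dvd ?D" by (metis divides_mult)
  then show ?thesis unfolding N_def by (simp add: mod_eq_dvd_iff)
qed

lemma coord_gt:
  "int p < xc (int p)" "int p < zc (int p)" "int q < yc (int q)" "int q < zc (int q)"
  "int r < xc (int r)" "int r < yc (int r)"
  unfolding xc_def yc_def zc_def
  using crt_part_gt[OF coprime_products(1)] crt_part_gt[OF coprime_products(2)]
    crt_part_gt[OF coprime_products(3)] coprime_pairs gt1
  by (simp_all add: less_1_mult)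

text \<open>Shifting by \<open>p\<close> subtracts \<open>xc p\<close> and \<open>zc p\<close> (with wrap-around), and these two
  amounts add up to exactly \<open>N + p\<close>; similarly for \<open>q\<close> and \<open>r\<close>.\<close>

lemma shifted_sums:
  "xc (int p) + zc (int p) = N + int p" "yc (int q) + zc (int q) = N + int q"
  "xc (int r) + yc (int r) = N + int r"
  using eq_of_mod_between[of N "xc (int p) + zc (int p)" "int p"]
    eq_of_mod_between[of N "yc (int q) + zc (int q)" "int q"]
    eq_of_mod_between[of N "xc (int r) + yc (int r)" "int r"]
    coord_sum_mod[of "int p"] coord_sum_mod[of "int q"] coord_sum_mod[of "int r"]
    coord_vanish coord_gt coord_bounds[of "int p"] coord_bounds[of "int q"] coord_bounds[of "int r"] N_gt
  by (simp_all add: ac_simps)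

lemma coords_of_sum:
  assumes "i < q" "j < p" "l < r" "m = int (p*r*i + q*r*j + p*q*l)"
  shows "xc m = int (p*r*i)" "yc m = int (q*r*j)" "zc m = int (p*q*l)"
proof -
  have "m = int (p*r) * int i + int q * (int r * int j + int p * int l)"
    "m = int (q*r) * int j + int p * (int r * int i + int q * int l)"
    "m = int (p*q) * int l + int r * (int p * int i + int q * int j)"
    using assms(4) by (simp_all add: algebra_simps)
  then show "xc m = int (p*r*i)" "yc m = int (q*r*j)" "zc m = int (p*q*l)"
    unfolding xc_def yc_def zc_def using crt_part_coord coprime_products gt1 assms(1-3)
    by (metis of_nat_0_le_iff of_nat_less_iff of_nat_mult)+
qed

lemma coeff_geom_triple_rep:
  "coeff (geom_poly (p*r) q * geom_poly (q*r) p * geom_poly (p*q) r) k = of_int (rep (int k))"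
proof -
  let ?box = "{..<q} \<times> {..<p} \<times> {..<r}"
  let ?S = "xc (int k) + yc (int k) + zc (int k) = int k"
  obtain i0 where i0: "i0 < q" "xc (int k) = int (p*r) * int i0"
    using crt_part_index gt1 unfolding xc_def by (metis zero_less_one less_trans)
  obtain j0 where j0: "j0 < p" "yc (int k) = int (q*r) * int j0"
    using crt_part_index gt1 unfolding yc_def by (metis zero_less_one less_trans)
  obtain l0 where l0: "l0 < r" "zc (int k) = int (p*q) * int l0"
    using crt_part_index gt1 unfolding zc_def by (metis zero_less_one less_trans)
  have pos: "0 < p * r" "0 < q * r" "0 < p * q" using gt1 by simp_all
  have key: "(p*r*i + q*r*j + p*q*l = k) \<longleftrightarrow> ((i, j, l) = (i0, j0, l0) \<and> ?S)"
    if "(i, j, l) \<in> ?box" for i j l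
  proof
    assume sum: "p*r*i + q*r*j + p*q*l = k"
    then have c: "xc (int k) = int (p*r*i)" "yc (int k) = int (q*r*j)" "zc (int k) = int (p*q*l)"
      using coords_of_sum[of i j l "int k"] that by auto
    then have "i = i0" "j = j0" "l = l0" using i0 j0 l0 pos by simp_all
    moreover have ?S unfolding c using sum by (simp only: of_nat_add[symmetric])
    ultimately show "(i, j, l) = (i0, j0, l0) \<and> ?S" by simp
  next
    assume "(i, j, l) = (i0, j0, l0) \<and> ?S"
    then have "int (p*r*i + q*r*j + p*q*l) = int k" using i0 j0 l0 by simp
    then show "p*r*i + q*r*j + p*q*l = k" by (simp only: of_nat_eq_iff)
  qed
  have "coeff (geom_poly (p*r) q * geom_poly (q*r) p * geom_poly (p*q) r) k
      = (\<Sum>b\<in>?box. if b = (i0, j0, l0) then (if ?S then 1 else 0) else 0)"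
    unfolding coeff_geom_triple
  proof (rule sum.cong[OF refl])
    fix b assume b: "b \<in> ?box"
    obtain i j l where ijl: "b = (i, j, l)" by (cases b)
    show "(case b of (i, j, l) \<Rightarrow> if p*r*i + q*r*j + p*q*l = k then 1 else 0)
        = (if b = (i0, j0, l0) then (if ?S then 1 else 0) else (0::complex))"
      unfolding ijl prod.case using key[of i j l] b ijl by simp
  qed
  also have "\<dots> = (if ?S then 1 else 0)" using i0 j0 l0 by (simp add: sum.delta)
  finally show ?thesis unfolding rep_def by simp
qed

end

text \<open>Subtracting amounts \<open>u\<close>, \<open>v\<close> from a residue \<open>X\<close> modulo \<open>N\<close> wraps around \<open>k1\<close>, \<open>k2\<close>
  times separately and \<open>k3\<close> times jointly; such wrap counts satisfy \<open>wrap_triple k1 k2 k3\<close>.\<close>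

definition wrap_triple :: "int \<Rightarrow> int \<Rightarrow> int \<Rightarrow> bool" where
  "wrap_triple k1 k2 k3 \<longleftrightarrow> 0 \<le> k1 \<and> k1 \<le> 1 \<and> 0 \<le> k2 \<and> k2 \<le> 1 \<and>
     k1 \<le> k3 \<and> k2 \<le> k3 \<and> k3 \<le> 1 + k1 \<and> k3 \<le> 1 + k2"

lemma mod_eq_shift:
  fixes x N k :: int
  assumes "0 \<le> x + N * k" "x + N * k < N"
  shows "x mod N = x + N * k"
proof -
  have "(x + N * k) mod N = x mod N" by simp
  moreover have "(x + N * k) mod N = x + N * k" using assms by (intro mod_pos_pos_trivial)
  ultimately show ?thesis by simp
qed

lemma wrap_counts:
  fixes X u v N :: int
  assumes "0 \<le> X" "X < N" "0 \<le> u" "u < N" "0 \<le> v" "v < N"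
  obtains k1 k2 k3 where "(X - u) mod N = X - u + N * k1" "(X - v) mod N = X - v + N * k2"
    "(X - u - v) mod N = X - u - v + N * k3" "wrap_triple k1 k2 k3"
proof
  define k1 :: int where "k1 = (if X < u then 1 else 0)"
  define k2 :: int where "k2 = (if X < v then 1 else 0)"
  define k3 :: int where "k3 = (if u + v \<le> X then 0 else if u + v \<le> X + N then 1 else 2)"
  show "(X - u) mod N = X - u + N * k1" by (rule mod_eq_shift) (use assms in \<open>auto simp: k1_def\<close>)
  show "(X - v) mod N = X - v + N * k2" by (rule mod_eq_shift) (use assms in \<open>auto simp: k2_def\<close>)
  show "(X - u - v) mod N = X - u - v + N * k3" by (rule mod_eq_shift) (use assms in \<open>auto simp: k3_def\<close>)
  show "wrap_triple k1 k2 k3" unfolding wrap_triple_def using assms by (auto simp: k1_def k2_def k3_def)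
qed

lemma eq_iff_multiple_zero:
  fixes N L R w :: int
  assumes "0 < N" "L = R + N * w" "0 \<le> L" "R < N"
  shows "(L = R \<longleftrightarrow> w = 0) \<and> 0 \<le> w"
proof -
  have "0 \<le> w"
  proof (rule ccontr)
    assume "\<not> 0 \<le> w"
    then have "N * w \<le> N * (-1)" using assms(1) by (intro mult_left_mono) auto
    then show False using assms by simp
  qed
  then show ?thesis using assms by simp
qed

text \<open>The finite combinatorial core: an alternating sum of eight indicators of
  \<open>t - |e| + (wrap counts) = 0\<close>, over the subsets \<open>e\<close> of a three-element set, lies in
  \<open>{-1, 0, 1}\<close> whenever all eight quantities are nonnegative.\<close>

lemma alternating_indicator_bound:
  fixes t k1 k2 k3 l1 l2 l3 m1 m2 m3 :: int
  assumes "wrap_triple k1 k2 k3" "wrap_triple l1 l2 l3" "wrap_triple m1 m2 m3"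
    "0 \<le> t" "0 \<le> t - 1 + k1 + m1" "0 \<le> t - 1 + l1 + m2" "0 \<le> t - 1 + k2 + l2"
    "0 \<le> t - 2 + k1 + l1 + m3" "0 \<le> t - 2 + k3 + l2 + m1" "0 \<le> t - 2 + k2 + l3 + m2"
    "0 \<le> t - 3 + k3 + l3 + m3"
  shows "\<bar>(if t = 0 then 1 else 0) - (if t - 1 + k1 + m1 = 0 then 1 else 0)
     - (if t - 1 + l1 + m2 = 0 then 1 else 0) - (if t - 1 + k2 + l2 = 0 then 1 else 0)
     + (if t - 2 + k1 + l1 + m3 = 0 then 1 else 0) + (if t - 2 + k3 + l2 + m1 = 0 then 1 else 0)
     + (if t - 2 + k2 + l3 + m2 = 0 then 1 else 0) - (if t - 3 + k3 + l3 + m3 = 0 then 1 else 0)\<bar> \<le> (1::int)"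
proof -
  have "k1 = 0 \<or> k1 = 1" "k2 = 0 \<or> k2 = 1" "l1 = 0 \<or> l1 = 1" "l2 = 0 \<or> l2 = 1"
    "m1 = 0 \<or> m1 = 1" "m2 = 0 \<or> m2 = 1"
    "k3 = 0 \<or> k3 = 1 \<or> k3 = 2" "l3 = 0 \<or> l3 = 1 \<or> l3 = 2" "m3 = 0 \<or> m3 = 1 \<or> m3 = 2"
    using assms(1-3) unfolding wrap_triple_def by auto
  then show ?thesis using assms unfolding wrap_triple_def by (elim disjE) (simp_all, linarith?)
qed

text \<open>Three residues \<open>X, Y, Z\<close> modulo \<open>N\<close> are shifted by the amounts belonging to three
  steps: the first step subtracts \<open>a\<close> from \<open>X\<close> and \<open>a'\<close> from \<open>Z\<close> with \<open>a + a' = N + s1\<close>,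
  the second \<open>b\<close> from \<open>Y\<close> and \<open>b'\<close> from \<open>Z\<close> with \<open>b + b' = N + s2\<close>, the third \<open>g\<close> from
  \<open>X\<close> and \<open>g'\<close> from \<open>Y\<close> with \<open>g + g' = N + s3\<close>. If \<open>X + Y + Z \<equiv> n (mod N)\<close> with
  \<open>0 \<le> n < N\<close>, the alternating sum over all combinations of steps of the indicators
  "the shifted residues sum to the correspondingly shifted \<open>n\<close>" is at most \<open>1\<close> in
  absolute value.\<close>

lemma alternating_shift_bound:
  fixes N X Y Z a a' b b' g g' s1 s2 s3 n t :: int
  assumes N: "0 < N" and XYZ: "0 \<le> X" "X < N" "0 \<le> Y" "Y < N" "0 \<le> Z" "Z < N"
    and amounts: "0 \<le> a" "a < N" "0 \<le> a'" "a' < N" "0 \<le> b" "b < N" "0 \<le> b'" "b' < N"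
       "0 \<le> g" "g < N" "0 \<le> g'" "g' < N"
    and sums: "a + a' = N + s1" "b + b' = N + s2" "g + g' = N + s3"
    and steps: "0 \<le> s1" "0 \<le> s2" "0 \<le> s3"
    and n: "n < N" "X + Y + Z = n + N * t"
  shows "\<bar>(if X + Y + Z = n then 1 else 0)
     - (if (X-a) mod N + Y + (Z-a') mod N = n - s1 then 1 else 0)
     - (if X + (Y-b) mod N + (Z-b') mod N = n - s2 then 1 else 0)
     - (if (X-g) mod N + (Y-g') mod N + Z = n - s3 then 1 else 0)
     + (if (X-a) mod N + (Y-b) mod N + (Z-a'-b') mod N = n - s1 - s2 then 1 else 0)
     + (if (X-a-g) mod N + (Y-g') mod N + (Z-a') mod N = n - s1 - s3 then 1 else 0)
     + (if (X-g) mod N + (Y-b-g') mod N + (Z-b') mod N = n - s2 - s3 then 1 else 0)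
     - (if (X-a-g) mod N + (Y-b-g') mod N + (Z-a'-b') mod N = n - s1 - s2 - s3 then 1 else 0)\<bar>
     \<le> (1::int)"
proof -
  obtain k1 k2 k3 where k: "(X-a) mod N = X-a+N*k1" "(X-g) mod N = X-g+N*k2"
    "(X-a-g) mod N = X-a-g+N*k3" "wrap_triple k1 k2 k3"
    using wrap_counts[of X N a g] XYZ amounts by blast
  obtain l1 l2 l3 where l: "(Y-b) mod N = Y-b+N*l1" "(Y-g') mod N = Y-g'+N*l2"
    "(Y-b-g') mod N = Y-b-g'+N*l3" "wrap_triple l1 l2 l3"
    using wrap_counts[of Y N b g'] XYZ amounts by blast
  obtain m1 m2 m3 where m: "(Z-a') mod N = Z-a'+N*m1" "(Z-b') mod N = Z-b'+N*m2"
    "(Z-a'-b') mod N = Z-a'-b'+N*m3" "wrap_triple m1 m2 m3"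
    using wrap_counts[of Z N a' b'] XYZ amounts by blast
  note facts = XYZ n k l m sums steps
  have w0: "(X + Y + Z = n \<longleftrightarrow> t = 0) \<and> 0 \<le> t"
    by (rule eq_iff_multiple_zero[OF N]) (use facts in auto)
  have w1: "((X-a) mod N + Y + (Z-a') mod N = n - s1 \<longleftrightarrow> t - 1 + k1 + m1 = 0) \<and> 0 \<le> t - 1 + k1 + m1"
    by (rule eq_iff_multiple_zero[OF N]) (use facts in \<open>auto simp: algebra_simps\<close>)
  have w2: "(X + (Y-b) mod N + (Z-b') mod N = n - s2 \<longleftrightarrow> t - 1 + l1 + m2 = 0) \<and> 0 \<le> t - 1 + l1 + m2"
    by (rule eq_iff_multiple_zero[OF N]) (use facts in \<open>auto simp: algebra_simps\<close>)
  have w3: "((X-g) mod N + (Y-g') mod N + Z = n - s3 \<longleftrightarrow> t - 1 + k2 + l2 = 0) \<and> 0 \<le> t - 1 + k2 + l2"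
    by (rule eq_iff_multiple_zero[OF N]) (use facts in \<open>auto simp: algebra_simps\<close>)
  have w4: "((X-a) mod N + (Y-b) mod N + (Z-a'-b') mod N = n - s1 - s2 \<longleftrightarrow> t - 2 + k1 + l1 + m3 = 0)
      \<and> 0 \<le> t - 2 + k1 + l1 + m3"
    by (rule eq_iff_multiple_zero[OF N]) (use facts in \<open>auto simp: algebra_simps\<close>)
  have w5: "((X-a-g) mod N + (Y-g') mod N + (Z-a') mod N = n - s1 - s3 \<longleftrightarrow> t - 2 + k3 + l2 + m1 = 0)
      \<and> 0 \<le> t - 2 + k3 + l2 + m1"
    by (rule eq_iff_multiple_zero[OF N]) (use facts in \<open>auto simp: algebra_simps\<close>)
  have w6: "((X-g) mod N + (Y-b-g') mod N + (Z-b') mod N = n - s2 - s3 \<longleftrightarrow> t - 2 + k2 + l3 + m2 = 0)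
      \<and> 0 \<le> t - 2 + k2 + l3 + m2"
    by (rule eq_iff_multiple_zero[OF N]) (use facts in \<open>auto simp: algebra_simps\<close>)
  have w7: "((X-a-g) mod N + (Y-b-g') mod N + (Z-a'-b') mod N = n - s1 - s2 - s3
        \<longleftrightarrow> t - 3 + k3 + l3 + m3 = 0) \<and> 0 \<le> t - 3 + k3 + l3 + m3"
    by (rule eq_iff_multiple_zero[OF N]) (use facts in \<open>auto simp: algebra_simps\<close>)
  have bound: "\<bar>(if t = 0 then 1 else 0) - (if t - 1 + k1 + m1 = 0 then 1 else 0)
     - (if t - 1 + l1 + m2 = 0 then 1 else 0) - (if t - 1 + k2 + l2 = 0 then 1 else 0)
     + (if t - 2 + k1 + l1 + m3 = 0 then 1 else 0) + (if t - 2 + k3 + l2 + m1 = 0 then 1 else 0)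
     + (if t - 2 + k2 + l3 + m2 = 0 then 1 else 0) - (if t - 3 + k3 + l3 + m3 = 0 then 1 else 0)\<bar>
     \<le> (1::int)"
    by (rule alternating_indicator_bound) (use k l m w0 w1 w2 w3 w4 w5 w6 w7 in auto)
  show ?thesis
    unfolding w0[THEN conjunct1] w1[THEN conjunct1] w2[THEN conjunct1] w3[THEN conjunct1]
      w4[THEN conjunct1] w5[THEN conjunct1] w6[THEN conjunct1] w7[THEN conjunct1]
    by (rule bound)
qed

lemma cyc_coeff_diff:
  assumes "1 < m" "0 \<le> n"
  shows "cyc_coeff m n - cyc_coeff m (n - 1) = - coeff (unity_poly 1 * Phi m) (nat n)"
proof -
  have "unity_poly 1 * Phi m = pCons 0 (Phi m) - Phi m"
    by (simp add: unity_poly_def monom_Suc algebra_simps)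
  then have "coeff (unity_poly 1 * Phi m) (nat n)
      = (if nat n = 0 then 0 else coeff (Phi m) (nat n - 1)) - coeff (Phi m) (nat n)"
    by (cases "nat n") auto
  moreover have "nat (n - 1) = nat n - 1" by simp
  ultimately show ?thesis
    unfolding cyc_coeff_def cyclotomic_poly_eq_Phi[OF assms(1)] using assms(2) by auto
qed

context ternary
begin

text \<open>Negative integers are never represented, since the coordinates are nonnegative.\<close>

lemma rep_neg: "m < 0 \<Longrightarrow> rep m = 0"
  using coord_bounds[of m] unfolding rep_def by auto

lemma coeff_monom_mult_geom_triple:
  "coeff (monom 1 s * (geom_poly (p*r) q * geom_poly (q*r) p * geom_poly (p*q) r)) k
     = of_int (rep (int k - int s))"
proof (cases "k < s")
  case True
  then show ?thesis using rep_neg[of "int k - int s"] by (simp add: coeff_monom_mult)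
next
  case False
  then have "int (k - s) = int k - int s" by simp
  then show ?thesis using False by (simp add: coeff_monom_mult coeff_geom_triple_rep)
qed

definition alt_rep :: "int \<Rightarrow> int" where
  "alt_rep n = rep n - rep (n - p) - rep (n - q) - rep (n - r)
     + rep (n - p - q) + rep (n - p - r) + rep (n - q - r) - rep (n - p - q - r)"

text \<open>Below degree \<open>N\<close>, the coefficients of \<open>(x - 1) Phi N\<close> are (up to sign) the values of
  \<open>alt_rep\<close>; this is the ternary key identity read coefficientwise.\<close>

lemma coeff_unity_Phi:
  assumes "k < p * q * r"
  shows "coeff (unity_poly 1 * Phi (p*q*r)) k = - of_int (alt_rep (int k))"
proof -
  let ?G = "geom_poly (p*r) q * geom_poly (q*r) p * geom_poly (p*q) r"
  let ?c = "\<lambda>s. coeff (monom 1 s * ?G) k"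
  have "coeff (unity_poly 1 * Phi (p*q*r)) k
      = coeff (unity_poly 1 * Phi (p*q*r) * unity_poly (p*q*r) * unity_poly (p*q*r)) k"
    using assms by (simp add: coeff_mult_unity_poly_square)
  also have "\<dots> = coeff (unity_poly p * unity_poly q * unity_poly r * ?G) k"
    using ternary_key_identity[OF prime_p prime_q prime_r p_ne_q p_ne_r q_ne_r] by simp
  also have "\<dots> = ?c (p+q+r) - ?c (p+q) - ?c (p+r) - ?c (q+r) + ?c p + ?c q + ?c r - coeff ?G k"
    unfolding unity_poly_triple_expand by (simp add: algebra_simps)
  also have "\<dots> = - of_int (alt_rep (int k))"
    unfolding coeff_monom_mult_geom_triple coeff_geom_triple_rep alt_rep_def
    by (simp add: algebra_simps)
  finally show ?thesis .
qed

lemma coords_shift: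
  "xc (m - int p) = (xc m - xc (int p)) mod N" "yc (m - int p) = yc m"
  "zc (m - int p) = (zc m - zc (int p)) mod N"
  "xc (m - int q) = xc m" "yc (m - int q) = (yc m - yc (int q)) mod N"
  "zc (m - int q) = (zc m - zc (int q)) mod N"
  "xc (m - int r) = (xc m - xc (int r)) mod N" "yc (m - int r) = (yc m - yc (int r)) mod N"
  "zc (m - int r) = zc m"
  using coord_diff coord_vanish coord_bounds by simp_all

text \<open>The main estimate: writing the eight shifted indicators in terms of the coordinates
  of \<open>n\<close>, the combinatorial bound applies with the amounts \<open>xc p, zc p\<close> (for \<open>p\<close>),
  \<open>yc q, zc q\<close> (for \<open>q\<close>) and \<open>xc r, yc r\<close> (for \<open>r\<close>).\<close>

lemma alt_rep_bound:
  assumes "0 \<le> n" "n < N"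
  shows "\<bar>alt_rep n\<bar> \<le> 1"
proof -
  define X Y Z where "X = xc n" and "Y = yc n" and "Z = zc n"
  define t where "t = (X + Y + Z) div N"
  have "(X + Y + Z) mod N = n" unfolding X_def Y_def Z_def using coord_sum_mod assms by simp
  then have t: "X + Y + Z = n + N * t"
    using div_mult_mod_eq[of "X + Y + Z" N] unfolding t_def by (simp add: mult.commute)
  have "\<bar>alt_rep n\<bar> = \<bar>(if X + Y + Z = n then 1 else 0)
     - (if (X - xc p) mod N + Y + (Z - zc p) mod N = n - p then 1 else 0)
     - (if X + (Y - yc q) mod N + (Z - zc q) mod N = n - q then 1 else 0)
     - (if (X - xc r) mod N + (Y - yc r) mod N + Z = n - r then 1 else 0)
     + (if (X - xc p) mod N + (Y - yc q) mod N + (Z - zc p - zc q) mod N = n - p - q then 1 else 0)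
     + (if (X - xc p - xc r) mod N + (Y - yc r) mod N + (Z - zc p) mod N = n - p - r then 1 else 0)
     + (if (X - xc r) mod N + (Y - yc q - yc r) mod N + (Z - zc q) mod N = n - q - r then 1 else 0)
     - (if (X - xc p - xc r) mod N + (Y - yc q - yc r) mod N + (Z - zc p - zc q) mod N
          = n - p - q - r then 1 else 0)\<bar>"
    unfolding alt_rep_def rep_def X_def Y_def Z_def by (simp only: coords_shift mod_diff_left_eq)
  also have "\<dots> \<le> 1"
    by (rule alternating_shift_bound)
      (use coord_bounds N_gt shifted_sums assms t in \<open>auto simp: X_def Y_def Z_def\<close>)
  finally show ?thesis .
qed

end

text \<open>Outside \<open>[0, N)\<close> both coefficients vanish (\<open>deg Phi_N \<le> N - 2\<close>); inside,
  the difference is a coefficient of \<open>(x - 1) Phi_N\<close>, i.e. \<open>alt_rep n\<close>. The hypotheses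
  \<open>p < q\<close>, \<open>p < r\<close> are only needed to make the three primes distinct.\<close>

theorem theorem3:
  fixes p q r :: nat and n :: int
  assumes "prime p" "prime q" "prime r"
    and "q \<noteq> r" and "p < q" and "p < r"
  shows "cmod (cyc_coeff (p * q * r) n - cyc_coeff (p * q * r) (n - 1)) \<le> 1"
proof -
  interpret ternary p q r using assms by unfold_locales auto
  have N: "N = int (p * q * r)" "p < p * q * r"
    using N_gt(1) unfolding N_def by (simp_all only: of_nat_less_iff)
  have N1: "1 < p * q * r" using N(2) gt1 by linarith
  consider "n < 0" | "int (p * q * r) \<le> n" | "0 \<le> n" "n < int (p * q * r)" by linarith
  then show ?thesis
  proof cases
    case 1
    then show ?thesis by (simp add: cyc_coeff_def)
  next
    case 2
    have "p * q * r - 2 < nat (n - 1)"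
      using 2 N1 by (simp add: zless_nat_eq_int_zless of_nat_diff)
    then have "degree (cyclotomic_poly (p * q * r)) < nat (n - 1)"
      using degree_cyclotomic_poly_le[OF assms(1) N(2)] by simp
    then show ?thesis using 2 by (simp add: cyc_coeff_def coeff_eq_0)
  next
    case 3
    then have "nat n < p * q * r" by (simp add: nat_less_iff)
    then have "cmod (cyc_coeff (p * q * r) n - cyc_coeff (p * q * r) (n - 1)) = \<bar>alt_rep n\<bar>"
      using cyc_coeff_diff[OF N1 3(1)] coeff_unity_Phi 3(1) by simp
    moreover have "\<bar>alt_rep n\<bar> \<le> 1" using alt_rep_bound 3 N(1) by simp
    ultimately show ?thesis by (simp flip: of_int_abs)
  qed
qed

end
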